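(* In $k(Z)$ one has $k(Z)^g=k(b_2,b_3,a_2,a_3)$. More precisely, $a_j^2-b_j^3\neq 0$ for $j=2,3$ and $$u_1=x_1^2=\frac{a_2^2-b_2}{a_2^2-b_2^3}=\frac{a_3^2-b_3}{a_3^2-b_3^3}.$$
   Context: $k$ is a field of characteristic $\neq 2$ containing a primitive fourth root of unity $\sqrt{-1}$. $k(Z)=k(x_1,x_2,x_3,y_1,y_2,y_3)$ where $x_1,x_2,x_3$ are algebraically independent over $k$ and $y_i^2=x_i(x_i^2-1)$. $g$ is the automorphism of $k(Z)$ with $g^*x_i=-x_i$, $g^*y_i=\sqrt{-1}\,y_i$, and $k(Z)^g$ is its fixed field. Set $b_j=x_j/x_1$, $a_j=y_j/y_1$ ($j=2,3$). *)

theory Defs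
  imports "HOL-Computational_Algebra.Polynomial"
begin

definition is_subfield :: "'a::field set \<Rightarrow> bool" where
  "is_subfield F \<longleftrightarrow> 0 \<in> F \<and> 1 \<in> F \<and>
     (\<forall>a\<in>F. \<forall>b\<in>F. a + b \<in> F \<and> a * b \<in> F) \<and>
     (\<forall>a\<in>F. - a \<in> F \<and> inverse a \<in> F)"

definition gen_field :: "'a::field set \<Rightarrow> 'a set" where
  "gen_field S = \<Inter>{F. is_subfield F \<and> S \<subseteq> F}"

text \<open>Evaluation of a trivariate polynomial (encoded as a nested univariate polynomial)
  at the point (t1, t2, t3).\<close>

definition eval3 :: "'a::comm_ring_1 poly poly poly \<Rightarrow> 'a \<Rightarrow> 'a \<Rightarrow> 'a \<Rightarrow> 'a" where
  "eval3 p t1 t2 t3 =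
     poly (map_poly (\<lambda>q. poly (map_poly (\<lambda>r. poly r t1) q) t2) p) t3"

definition alg_indep3 :: "'a::field set \<Rightarrow> 'a \<Rightarrow> 'a \<Rightarrow> 'a \<Rightarrow> bool" where
  "alg_indep3 k t1 t2 t3 \<longleftrightarrow>
     (\<forall>p :: 'a poly poly poly.
        (\<forall>i j l. coeff (coeff (coeff p i) j) l \<in> k) \<and> eval3 p t1 t2 t3 = 0 \<longrightarrow> p = 0)"

end

theory Submission
  imports Defs
begin

(* Let L be the field generated over k by b2, b3, a2, a3.  Every generator of L is
   fixed by g, so L lies in the fixed field.  The explicit identity
     a_j^2 - b_j = x_j (x_j^2 - x1^2) / (x1 (x1^2 - 1)),   a_j^2 - b_j^3 = that / x1^2
   (valid since x1, x_j are algebraically independent, so no degenerate value occurs) shows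
   u1 = x1^2 \<in> L, hence y1^4 = u1 (u1 - 1)^2 \<in> L.  We are then in a quartic Kummer situation:
   g fixes L, g y1 = i y1 with i a primitive fourth root of unity in L.  For such data the set
   L[y1] = L + L y1 + L y1^2 + L y1^3 is a field (closure under inverses uses the norm
   a \<cdot> g a \<cdot> g^2 a \<cdot> g^3 a, which is g-fixed), and its g-fixed elements lie in L (the trace
   z + g z + g^2 z + g^3 z equals 4 c0).  Since L[y1] contains all of x1, x2, x3, y1, y2, y3 it is
   the whole field, so the fixed field is exactly L. *)

lemma subfield_0: "is_subfield F \<Longrightarrow> 0 \<in> F" by (simp add: is_subfield_def)
lemma subfield_1: "is_subfield F \<Longrightarrow> 1 \<in> F" by (simp add: is_subfield_def)
lemma subfield_add: "is_subfield F \<Longrightarrow> a \<in> F \<Longrightarrow> b \<in> F \<Longrightarrow> a + b \<in> F"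
  by (simp add: is_subfield_def)
lemma subfield_mult: "is_subfield F \<Longrightarrow> a \<in> F \<Longrightarrow> b \<in> F \<Longrightarrow> a * b \<in> F"
  by (simp add: is_subfield_def)
lemma subfield_uminus: "is_subfield F \<Longrightarrow> a \<in> F \<Longrightarrow> - a \<in> F"
  by (simp add: is_subfield_def)
lemma subfield_inverse: "is_subfield F \<Longrightarrow> a \<in> F \<Longrightarrow> inverse a \<in> F"
  by (simp add: is_subfield_def)
lemma subfield_diff: "is_subfield F \<Longrightarrow> a \<in> F \<Longrightarrow> b \<in> F \<Longrightarrow> a - b \<in> F"
  by (metis diff_conv_add_uminus subfield_add subfield_uminus)
lemma subfield_divide: "is_subfield F \<Longrightarrow> a \<in> F \<Longrightarrow> b \<in> F \<Longrightarrow> a / b \<in> F"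
  by (metis divide_inverse subfield_mult subfield_inverse)
lemma subfield_power: "is_subfield F \<Longrightarrow> a \<in> F \<Longrightarrow> a ^ n \<in> F"
  by (induction n) (auto intro: subfield_1 subfield_mult)

lemmas subfield_intros = subfield_0 subfield_1 subfield_add subfield_mult subfield_uminus
  subfield_inverse subfield_diff subfield_divide subfield_power

lemma gen_field_subfield: "is_subfield (gen_field S)"
  unfolding gen_field_def is_subfield_def by auto

lemma gen_field_superset: "S \<subseteq> gen_field S"
  unfolding gen_field_def by auto

lemma gen_field_least: "is_subfield F \<Longrightarrow> S \<subseteq> F \<Longrightarrow> gen_field S \<subseteq> F"
  unfolding gen_field_def by auto

lemma field_endo_facts:
  fixes g :: "'a::field \<Rightarrow> 'a"
  assumes g_add: "\<And>a b. g (a + b) = g a + g b"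
    and g_mult: "\<And>a b. g (a * b) = g a * g b"
    and g_inj: "inj g"
  shows "g 0 = 0" "g 1 = 1" "g (- a) = - g a" "g (inverse a) = inverse (g a)"
    "g (a - b) = g a - g b" "g (a / b) = g a / g b" "g (a ^ n) = g a ^ n"
proof -
  show g0: "g 0 = 0" using g_add[of 0 0] by (metis add.right_neutral add_left_cancel)
  have "g 1 \<noteq> 0" using g_inj g0 by (metis injD one_neq_zero)
  then show g1: "g 1 = 1" using g_mult[of 1 1] by simp
  show g_neg: "g (- a) = - g a" for a
    using g_add[of a "- a"] g0 by (simp add: eq_neg_iff_add_eq_0 add.commute)
  show g_inv: "g (inverse a) = inverse (g a)" for a
  proof (cases "a = 0")
    case True then show ?thesis using g0 by simp
  next
    case False
    then have "g a * g (inverse a) = 1" using g_mult[of a "inverse a"] g1 by simp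
    then show ?thesis by (metis inverse_unique)
  qed
  show "g (a - b) = g a - g b" using g_add[of a "- b"] g_neg by simp
  show "g (a / b) = g a / g b" using g_mult g_inv by (simp add: divide_inverse)
  show "g (a ^ n) = g a ^ n" by (induction n) (simp_all add: g1 g_mult)
qed

lemma fixed_points_subfield:
  fixes g :: "'a::field \<Rightarrow> 'a"
  assumes "\<And>a b. g (a + b) = g a + g b" and "\<And>a b. g (a * b) = g a * g b" and "inj g"
  shows "is_subfield {z. g z = z}"
  using field_endo_facts[OF assms] assms(1,2) unfolding is_subfield_def by auto

lemma alg_indep3_no_root:
  assumes "alg_indep3 k t1 t2 t3" and "\<forall>i j l. coeff (coeff (coeff p i) j) l \<in> k"
    and "p \<noteq> 0"
  shows "eval3 p t1 t2 t3 \<noteq> 0"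
  using assms unfolding alg_indep3_def by blast

text \<open>In particular t1 is transcendental over k and t2, t3 are not k-multiples of t1; these
  are the nondegeneracy conditions needed for the rational identity below.\<close>
lemma alg_indep3_nondegenerate:
  assumes k: "is_subfield k" and indep: "alg_indep3 k t1 t2 t3" and c: "c \<in> k"
  shows "t1 \<noteq> c" "t2 \<noteq> c * t1" "t3 \<noteq> c * t1"
proof -
  have coeffs: "0 \<in> k" "1 \<in> k" "- c \<in> k" using k c by (auto intro: subfield_intros)
  have "eval3 [:[:[:- c, 1:]:]:] t1 t2 t3 \<noteq> 0"
    using coeffs by (intro alg_indep3_no_root[OF indep]) (auto simp: coeff_pCons split: nat.split)
  then show "t1 \<noteq> c" by (simp add: eval3_def map_poly_pCons)
  have "eval3 [:[:[:0, - c:], 1:]:] t1 t2 t3 \<noteq> 0"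
    using coeffs by (intro alg_indep3_no_root[OF indep]) (auto simp: coeff_pCons split: nat.split)
  then show "t2 \<noteq> c * t1" by (simp add: eval3_def map_poly_pCons mult.commute)
  have "eval3 [:[:[:0, - c:]:], 1:] t1 t2 t3 \<noteq> 0"
    using coeffs by (intro alg_indep3_no_root[OF indep]) (auto simp: coeff_pCons split: nat.split)
  then show "t3 \<noteq> c * t1" by (simp add: eval3_def map_poly_pCons mult.commute)
qed

section \<open>The rational identity on a product of two Legendre curves\<close>

lemma legendre_quotient_identity:
  fixes x1 x y1 y :: "'a::field"
  assumes x1: "x1 \<noteq> 0" "x1 ^ 2 \<noteq> 1" and x: "x \<noteq> 0" "x ^ 2 \<noteq> x1 ^ 2"
    and curve1: "y1 ^ 2 = x1 * (x1 ^ 2 - 1)" and curve: "y ^ 2 = x * (x ^ 2 - 1)"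
  shows "(y / y1) ^ 2 - (x / x1) ^ 3 \<noteq> 0"
    and "x1 ^ 2 = ((y / y1) ^ 2 - x / x1) / ((y / y1) ^ 2 - (x / x1) ^ 3)"
proof -
  have nz: "x1 ^ 2 - 1 \<noteq> 0" "x * (x ^ 2 - x1 ^ 2) \<noteq> 0" using assms by auto
  have a_sq: "(y / y1) ^ 2 = x * (x ^ 2 - 1) / (x1 * (x1 ^ 2 - 1))"
    by (simp add: power_divide curve curve1)
  have denom: "(y / y1) ^ 2 - (x / x1) ^ 3 = x * (x ^ 2 - x1 ^ 2) / (x1 ^ 3 * (x1 ^ 2 - 1))"
    unfolding a_sq using x1 nz
    by (simp add: divide_simps) (simp add: algebra_simps power2_eq_square power3_eq_cube)
  have numer: "(y / y1) ^ 2 - x / x1 = x * (x ^ 2 - x1 ^ 2) / (x1 * (x1 ^ 2 - 1))"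
    unfolding a_sq using x1 nz
    by (simp add: divide_simps) (simp add: algebra_simps power2_eq_square power3_eq_cube)
  show "(y / y1) ^ 2 - (x / x1) ^ 3 \<noteq> 0" unfolding denom using x1 nz by simp
  show "x1 ^ 2 = ((y / y1) ^ 2 - x / x1) / ((y / y1) ^ 2 - (x / x1) ^ 3)"
    unfolding denom numer using x1 nz
    by (simp add: divide_simps) (simp add: power2_eq_square power3_eq_cube algebra_simps)
qed

lemma generic_quotient_identities:
  fixes k :: "'a::field set"
  assumes k: "is_subfield k" and indep: "alg_indep3 k x1 x2 x3"
    and curve1: "y1 ^ 2 = x1 * (x1 ^ 2 - 1)"
    and curve2: "y2 ^ 2 = x2 * (x2 ^ 2 - 1)" and curve3: "y3 ^ 2 = x3 * (x3 ^ 2 - 1)"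
  shows "x1 ^ 2 \<noteq> 1" and "y1 \<noteq> 0"
    and "(y2 / y1) ^ 2 - (x2 / x1) ^ 3 \<noteq> 0"
    and "x1 ^ 2 = ((y2 / y1) ^ 2 - x2 / x1) / ((y2 / y1) ^ 2 - (x2 / x1) ^ 3)"
    and "(y3 / y1) ^ 2 - (x3 / x1) ^ 3 \<noteq> 0"
    and "x1 ^ 2 = ((y3 / y1) ^ 2 - x3 / x1) / ((y3 / y1) ^ 2 - (x3 / x1) ^ 3)"
proof -
  have consts_k: "0 \<in> k" "1 \<in> k" "- 1 \<in> k" using k by (auto intro: subfield_intros)
  note nondeg = alg_indep3_nondegenerate[OF k indep]
  have x1_nz: "x1 \<noteq> 0" and x1_sq: "x1 ^ 2 \<noteq> 1"
    using nondeg(1) consts_k by (auto simp: power2_eq_1_iff)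
  have x2_nz: "x2 \<noteq> 0" and x2_sq: "x2 ^ 2 \<noteq> x1 ^ 2"
    using nondeg(2) consts_k by (force simp: power2_eq_iff)+
  have x3_nz: "x3 \<noteq> 0" and x3_sq: "x3 ^ 2 \<noteq> x1 ^ 2"
    using nondeg(3) consts_k by (force simp: power2_eq_iff)+
  show "x1 ^ 2 \<noteq> 1" by (fact x1_sq)
  show "y1 \<noteq> 0" using curve1 x1_nz x1_sq by auto
  show "(y2 / y1) ^ 2 - (x2 / x1) ^ 3 \<noteq> 0"
    and "x1 ^ 2 = ((y2 / y1) ^ 2 - x2 / x1) / ((y2 / y1) ^ 2 - (x2 / x1) ^ 3)"
    using legendre_quotient_identity[OF x1_nz x1_sq x2_nz x2_sq curve1 curve2] by blast+
  show "(y3 / y1) ^ 2 - (x3 / x1) ^ 3 \<noteq> 0"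
    and "x1 ^ 2 = ((y3 / y1) ^ 2 - x3 / x1) / ((y3 / y1) ^ 2 - (x3 / x1) ^ 3)"
    using legendre_quotient_identity[OF x1_nz x1_sq x3_nz x3_sq curve1 curve3] by blast+
qed

section \<open>Quartic Kummer extensions\<close>

definition span4 :: "'a::field set \<Rightarrow> 'a \<Rightarrow> 'a set" where
  "span4 L y = {c0 + c1 * y + c2 * y ^ 2 + c3 * y ^ 3 | c0 c1 c2 c3.
                  c0 \<in> L \<and> c1 \<in> L \<and> c2 \<in> L \<and> c3 \<in> L}"

lemma mult_mod_quartic:
  fixes y :: "'a::comm_ring_1"
  assumes "y ^ 4 = m"
  shows "(c0 + c1*y + c2*y^2 + c3*y^3) * (d0 + d1*y + d2*y^2 + d3*y^3) =
    (c0*d0 + m*(c1*d3 + c2*d2 + c3*d1)) + (c0*d1 + c1*d0 + m*(c2*d3 + c3*d2))*y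
    + (c0*d2 + c1*d1 + c2*d0 + m*(c3*d3))*y^2 + (c0*d3 + c1*d2 + c2*d1 + c3*d0)*y^3"
  unfolding assms[symmetric]
  by (simp add: algebra_simps power2_eq_square power3_eq_cube power4_eq_xxxx)

locale quartic_kummer =
  fixes L :: "'a::field set" and g :: "'a \<Rightarrow> 'a" and i y :: 'a
  assumes L_subfield: "is_subfield L"
    and g_add: "\<And>a b. g (a + b) = g a + g b"
    and g_mult: "\<And>a b. g (a * b) = g a * g b"
    and g_inj: "inj g"
    and g_fixes_L: "\<And>c. c \<in> L \<Longrightarrow> g c = c"
    and i_in_L: "i \<in> L" and i_sq: "i ^ 2 = -1"
    and two_nonzero: "(2::'a) \<noteq> 0"
    and y4_in_L: "y ^ 4 \<in> L"
    and g_y: "g y = i * y"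
begin

abbreviation S where "S \<equiv> span4 L y"

lemma span4_memI: "c0 \<in> L \<Longrightarrow> c1 \<in> L \<Longrightarrow> c2 \<in> L \<Longrightarrow> c3 \<in> L \<Longrightarrow>
    c0 + c1 * y + c2 * y ^ 2 + c3 * y ^ 3 \<in> S"
  unfolding span4_def by blast

lemma span4_memE:
  assumes "z \<in> S"
  obtains c0 c1 c2 c3 where "c0 \<in> L" "c1 \<in> L" "c2 \<in> L" "c3 \<in> L"
    and "z = c0 + c1 * y + c2 * y ^ 2 + c3 * y ^ 3"
  using assms unfolding span4_def by blast

lemma base_subset_span4: "L \<subseteq> S"
proof
  fix c assume "c \<in> L"
  then have "c + 0 * y + 0 * y ^ 2 + 0 * y ^ 3 \<in> S"
    using L_subfield by (intro span4_memI) (auto intro: subfield_intros)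
  then show "c \<in> S" by simp
qed

lemma y_in_span4: "y \<in> S"
  using span4_memI[of 0 1 0 0] L_subfield by (simp add: subfield_0 subfield_1)

lemma span4_add:
  assumes "a \<in> S" "b \<in> S" shows "a + b \<in> S"
proof -
  obtain c0 c1 c2 c3 where c: "c0 \<in> L" "c1 \<in> L" "c2 \<in> L" "c3 \<in> L"
    and a: "a = c0 + c1 * y + c2 * y ^ 2 + c3 * y ^ 3" using assms(1) by (rule span4_memE)
  obtain d0 d1 d2 d3 where d: "d0 \<in> L" "d1 \<in> L" "d2 \<in> L" "d3 \<in> L"
    and b: "b = d0 + d1 * y + d2 * y ^ 2 + d3 * y ^ 3" using assms(2) by (rule span4_memE)
  have "a + b = (c0 + d0) + (c1 + d1) * y + (c2 + d2) * y ^ 2 + (c3 + d3) * y ^ 3"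
    unfolding a b by (simp add: algebra_simps)
  also have "\<dots> \<in> S" using c d L_subfield by (intro span4_memI) (auto intro: subfield_add)
  finally show ?thesis .
qed

lemma span4_uminus:
  assumes "a \<in> S" shows "- a \<in> S"
proof -
  obtain c0 c1 c2 c3 where c: "c0 \<in> L" "c1 \<in> L" "c2 \<in> L" "c3 \<in> L"
    and a: "a = c0 + c1 * y + c2 * y ^ 2 + c3 * y ^ 3" using assms by (rule span4_memE)
  have "- a = (- c0) + (- c1) * y + (- c2) * y ^ 2 + (- c3) * y ^ 3"
    unfolding a by (simp add: algebra_simps)
  also have "\<dots> \<in> S" using c L_subfield by (intro span4_memI) (auto intro: subfield_uminus)
  finally show ?thesis .
qed

lemma span4_mult:
  assumes "a \<in> S" "b \<in> S" shows "a * b \<in> S"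
proof -
  obtain c0 c1 c2 c3 where c: "c0 \<in> L" "c1 \<in> L" "c2 \<in> L" "c3 \<in> L"
    and a: "a = c0 + c1 * y + c2 * y ^ 2 + c3 * y ^ 3" using assms(1) by (rule span4_memE)
  obtain d0 d1 d2 d3 where d: "d0 \<in> L" "d1 \<in> L" "d2 \<in> L" "d3 \<in> L"
    and b: "b = d0 + d1 * y + d2 * y ^ 2 + d3 * y ^ 3" using assms(2) by (rule span4_memE)
  show ?thesis unfolding a b mult_mod_quartic[OF refl]
    using c d y4_in_L L_subfield by (intro span4_memI) (auto intro!: subfield_intros)
qed

lemma g_on_span4:
  assumes "c0 \<in> L" "c1 \<in> L" "c2 \<in> L" "c3 \<in> L"
  shows "g (c0 + c1 * y + c2 * y ^ 2 + c3 * y ^ 3) =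
         c0 + (i * c1) * y + (- c2) * y ^ 2 + (- i * c3) * y ^ 3"
proof -
  have endo: "g (a ^ n) = g a ^ n" for a n using field_endo_facts[OF g_add g_mult g_inj] by simp
  have i3: "i ^ 3 = - i" using i_sq by (simp add: power3_eq_cube power2_eq_square[symmetric])
  have "g (c0 + c1 * y + c2 * y ^ 2 + c3 * y ^ 3) =
        c0 + c1 * (i * y) + c2 * (i * y) ^ 2 + c3 * (i * y) ^ 3"
    using assms by (simp add: g_add g_mult endo g_fixes_L g_y)
  also have "\<dots> = c0 + (i * c1) * y + (- c2) * y ^ 2 + (- i * c3) * y ^ 3"
    by (simp add: power_mult_distrib i_sq i3)
  finally show ?thesis .
qed

lemma g_iterate_on_span4:
  assumes c: "c0 \<in> L" "c1 \<in> L" "c2 \<in> L" "c3 \<in> L"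
  shows "(g ^^ n) (c0 + c1 * y + c2 * y ^ 2 + c3 * y ^ 3) =
         c0 + (i ^ n * c1) * y + ((-1) ^ n * c2) * y ^ 2 + ((- i) ^ n * c3) * y ^ 3"
proof (induction n)
  case 0 then show ?case by simp
next
  case (Suc n)
  have coeffs: "i ^ n * c1 \<in> L" "(-1) ^ n * c2 \<in> L" "(- i) ^ n * c3 \<in> L"
    using c i_in_L L_subfield by (auto intro!: subfield_intros)
  show ?case using g_on_span4[OF c(1) coeffs] by (simp add: Suc.IH mult.assoc)
qed

lemma g_maps_span4:
  assumes "z \<in> S" shows "g z \<in> S"
proof -
  obtain c0 c1 c2 c3 where c: "c0 \<in> L" "c1 \<in> L" "c2 \<in> L" "c3 \<in> L"
    and z: "z = c0 + c1 * y + c2 * y ^ 2 + c3 * y ^ 3" using assms by (rule span4_memE)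
  show ?thesis unfolding z g_on_span4[OF c]
    using c i_in_L L_subfield by (intro span4_memI) (auto intro!: subfield_intros)
qed

lemma g_order_4_on_span4:
  assumes "z \<in> S" shows "g (g (g (g z))) = z"
proof -
  have i4: "i ^ 4 = 1" using i_sq by (metis power_mult numeral_Bit0 mult_2 numeral_One power_minus1_even)
  from assms obtain c0 c1 c2 c3 where c: "c0 \<in> L" "c1 \<in> L" "c2 \<in> L" "c3 \<in> L"
    and z: "z = c0 + c1 * y + c2 * y ^ 2 + c3 * y ^ 3" by (rule span4_memE)
  have "(g ^^ 4) z = z" unfolding z g_iterate_on_span4[OF c]
    using i4 by simp
  then show ?thesis by (simp add: numeral_eq_Suc)
qed

text \<open>Trace argument: a g-fixed element of the span lies in L.\<close>
lemma span4_fixed_in_base: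
  assumes zS: "z \<in> S" and fixed: "g z = z" shows "z \<in> L"
proof -
  from zS obtain c0 c1 c2 c3 where c: "c0 \<in> L" "c1 \<in> L" "c2 \<in> L" "c3 \<in> L"
    and z: "z = c0 + c1 * y + c2 * y ^ 2 + c3 * y ^ 3" by (rule span4_memE)
  have iterates_fixed: "(g ^^ n) z = z" for n by (induction n) (simp_all add: fixed)
  have "(\<Sum>n<4. (g ^^ n) z) = 4 * c0"
    unfolding z g_iterate_on_span4[OF c]
    by (simp add: numeral_eq_Suc algebra_simps) (use i_sq in algebra)
  then have "4 * z = 4 * c0" by (simp add: iterates_fixed)
  moreover have "(4::'a) \<noteq> 0" using two_nonzero
    by (metis mult_2 mult_eq_0_iff numeral_Bit0)
  ultimately show "z \<in> L" using c by simp
qed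

text \<open>Norm argument: a nonzero a has inverse (g a \<cdot> g^2 a \<cdot> g^3 a) / N(a) with N(a) \<in> L.\<close>
lemma span4_inverse:
  assumes aS: "a \<in> S" shows "inverse a \<in> S"
proof (cases "a = 0")
  case True then show ?thesis using base_subset_span4 L_subfield by (auto intro: subfield_0)
next
  case False
  define conj where "conj = g a * g (g a) * g (g (g a))"
  have conjS: "conj \<in> S" unfolding conj_def using aS by (simp add: span4_mult g_maps_span4)
  have "g (a * conj) = a * conj"
    using g_order_4_on_span4[OF aS] by (simp add: conj_def g_mult mult_ac)
  then have norm_L: "a * conj \<in> L" using span4_fixed_in_base span4_mult[OF aS conjS] by blast
  have "g z \<noteq> 0" if "z \<noteq> 0" for z
    using that g_inj field_endo_facts(1)[OF g_add g_mult g_inj] by (metis injD)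
  then have "conj \<noteq> 0" using False by (simp add: conj_def)
  then have "inverse a = conj * inverse (a * conj)" using False by (simp add: field_simps)
  moreover have "inverse (a * conj) \<in> S"
    using norm_L base_subset_span4 L_subfield by (auto intro: subfield_inverse)
  ultimately show ?thesis using conjS span4_mult by metis
qed

theorem span4_subfield: "is_subfield S"
  unfolding is_subfield_def
  using base_subset_span4 L_subfield subfield_0 subfield_1
  by (auto intro: span4_add span4_mult span4_uminus span4_inverse)

text \<open>If y is the ordinate of a point (x, y) of y^2 = x (x^2 - 1) with x^2 \<in> L, x^2 \<noteq> 1,
  then x = y^2 / (x^2 - 1) lies in the span.\<close>
lemma legendre_abscissa_in_span4:
  assumes curve: "y ^ 2 = x * (x ^ 2 - 1)" and x_sq_L: "x ^ 2 \<in> L" and x_sq: "x ^ 2 \<noteq> 1"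
  shows "x \<in> S"
proof -
  have "x ^ 2 - 1 \<noteq> 0" using x_sq by simp
  then have x_eq: "x = inverse (x ^ 2 - 1) * y ^ 2" by (simp add: curve field_simps)
  have "inverse (x ^ 2 - 1) \<in> L" using x_sq_L L_subfield by (auto intro!: subfield_intros)
  then have "inverse (x ^ 2 - 1) \<in> S" using base_subset_span4 by blast
  then have "inverse (x ^ 2 - 1) * y ^ 2 \<in> S"
    using y_in_span4 by (auto intro: span4_mult subfield_power[OF span4_subfield])
  then show ?thesis by (simp only: x_eq[symmetric])
qed

end

theorem mainTheorem5:
  fixes k :: "'a::field set"
    and i x1 x2 x3 y1 y2 y3 :: 'a
    and g :: "'a \<Rightarrow> 'a"
  assumes k_subfield: "is_subfield k"
    and char_not_2: "(2::'a) \<noteq> 0"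
    and i_in_k: "i \<in> k" and i_sq: "i ^ 2 = -1"
    and indep: "alg_indep3 k x1 x2 x3"
    and curve1: "y1 ^ 2 = x1 * (x1 ^ 2 - 1)"
    and curve2: "y2 ^ 2 = x2 * (x2 ^ 2 - 1)"
    and curve3: "y3 ^ 2 = x3 * (x3 ^ 2 - 1)"
    and generated: "gen_field (k \<union> {x1, x2, x3, y1, y2, y3}) = UNIV"
    and g_add: "\<And>a b. g (a + b) = g a + g b"
    and g_mult: "\<And>a b. g (a * b) = g a * g b"
    and g_bij: "bij g"
    and g_k: "\<And>c. c \<in> k \<Longrightarrow> g c = c"
    and g_x1: "g x1 = - x1" and g_x2: "g x2 = - x2" and g_x3: "g x3 = - x3"
    and g_y1: "g y1 = i * y1" and g_y2: "g y2 = i * y2" and g_y3: "g y3 = i * y3"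
  shows "let b2 = x2 / x1; b3 = x3 / x1; a2 = y2 / y1; a3 = y3 / y1 in
           {z. g z = z} = gen_field (k \<union> {b2, b3, a2, a3}) \<and>
           a2 ^ 2 - b2 ^ 3 \<noteq> 0 \<and> a3 ^ 2 - b3 ^ 3 \<noteq> 0 \<and>
           x1 ^ 2 = (a2 ^ 2 - b2) / (a2 ^ 2 - b2 ^ 3) \<and>
           x1 ^ 2 = (a3 ^ 2 - b3) / (a3 ^ 2 - b3 ^ 3)"
proof -
  define b2 where "b2 = x2 / x1"
  define b3 where "b3 = x3 / x1"
  define a2 where "a2 = y2 / y1"
  define a3 where "a3 = y3 / y1"
  define L where "L = gen_field (k \<union> {b2, b3, a2, a3})"
  note ids = generic_quotient_identities[OF k_subfield indep curve1 curve2 curve3,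
      folded a2_def a3_def b2_def b3_def]
  have g_inj: "inj g" using g_bij by (rule bij_is_inj)
  have L_subfield: "is_subfield L" unfolding L_def by (rule gen_field_subfield)
  have k_L: "k \<subseteq> L" and gens_L: "b2 \<in> L" "b3 \<in> L" "a2 \<in> L" "a3 \<in> L"
    using gen_field_superset[of "k \<union> {b2, b3, a2, a3}"] unfolding L_def by auto
  have L_fixed: "L \<subseteq> {z. g z = z}" unfolding L_def
    using g_k ids(2) i_sq field_endo_facts[OF g_add g_mult g_inj]
    by (intro gen_field_least[OF fixed_points_subfield[OF g_add g_mult g_inj]])
       (auto simp: b2_def b3_def a2_def a3_def g_x1 g_x2 g_x3 g_y1 g_y2 g_y3)
  have u1_L: "x1 ^ 2 \<in> L" unfolding ids(4) using L_subfield gens_L by (auto intro!: subfield_intros)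
  have "y1 ^ 4 = x1 ^ 2 * (x1 ^ 2 - 1) ^ 2"
    by (metis curve1 power_mult_distrib numeral_Bit0 power_add power2_eq_square)
  then have "y1 ^ 4 \<in> L" using u1_L L_subfield by (auto intro!: subfield_intros)
  then interpret kummer: quartic_kummer L g i y1
    using L_subfield g_add g_mult g_inj L_fixed i_in_k k_L i_sq char_not_2 g_y1
    by unfold_locales auto
  txt \<open>L[y1] is a field containing every generator (x_j = b_j x1, y_j = a_j y1), so it is all.\<close>
  have "x2 = b2 * x1" "x3 = b3 * x1" "y2 = a2 * y1" "y3 = a3 * y1"
    using ids(2) curve1 ids(1) by (auto simp: b2_def b3_def a2_def a3_def)
  then have "k \<union> {x1, x2, x3, y1, y2, y3} \<subseteq> span4 L y1"
    using k_L gens_L kummer.base_subset_span4 kummer.y_in_span4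
      kummer.legendre_abscissa_in_span4[OF curve1 u1_L ids(1)]
    by (auto intro: kummer.span4_mult)
  then have "span4 L y1 = UNIV"
    using gen_field_least[OF kummer.span4_subfield] generated by blast
  then have "{z. g z = z} = L" using L_fixed kummer.span4_fixed_in_base by blast
  then show ?thesis
    unfolding Let_def b2_def[symmetric] b3_def[symmetric] a2_def[symmetric] a3_def[symmetric]
    using ids unfolding L_def by simp
qed

end
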